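(* Let $K$ be a compact metric space, let $\varepsilon_1>0$ and $0<\delta<\varepsilon_1/34$, and let $(f_n)$ be a sequence in $C(K)$ (real or complex valued) with $\|f_n\|_\infty=1$. Put $A_n=\{k\in K: f_n^+(k)>\varepsilon_1-\delta\}$ and $B_n=\{k\in K:|f_n(k)|<\delta\}$. Suppose that for every $N$ and every partition $\{1,\dots,N\}=I\cup J$ into disjoint sets, $\bigcap_{n\in I}A_n\cap\bigcap_{n\in J}B_n\neq\emptyset$. Then for every $N$ and all scalars $a_1,\dots,a_N$, $$\Big\|\sum_{j=1}^N a_jf_j\Big\|_\infty\ge\frac{\varepsilon_1}{16}\sum_{j=1}^N|a_j| ,$$ i.e. $(f_n)$ is $\frac{16}{\varepsilon_1}$-equivalent to the unit vector basis of $\ell_1$.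
   Context: For real valued $f\in C(K)$, $f^+=\max(f,0)$; for complex valued $f\in C(K)$, $f^+=\min\big((\operatorname{Re}f)^+,(\operatorname{Im}f)^+\big)$. In the real case the scalars $a_j$ are real, in the complex case complex. *)

theory Defs
  imports "HOL-Analysis.Analysis"
begin

definition sup_norm :: "'k set \<Rightarrow> ('k \<Rightarrow> 'a::real_normed_vector) \<Rightarrow> real" where
  "sup_norm K g = (SUP k\<in>K. norm (g k))"

definition pos_part_real :: "real \<Rightarrow> real" where
  "pos_part_real x = max x 0"

definition pos_part_complex :: "complex \<Rightarrow> real" where
  "pos_part_complex z = min (max (Re z) 0) (max (Im z) 0)"

end

theory Submission
  imports Defs
begin

(* The cones {z. c z lies in the closed first quadrant} for the unimodular scalars c = 1, -1
   (real case) or c = 1, i, -1, -i (complex case) cover all scalars, so for one such c the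
   indices I with c a_j in the quadrant carry at least a quarter of S = sum_j |a_j|. The
   hypothesis gives a point k with f_n^+(k) > eps1 - delta on I and |f_n(k)| < delta off I.
   Testing the sum at k against the norm-one real functional z \<mapsto> Im (c z) (resp. c z)
   bounds it below by (eps1 - delta) sum_I |a_j| - delta sum_(J-I) |a_j| >= (eps1/4 - delta) S,
   which is at least eps1/16 S. *)

lemma norm_le_sup_norm:
  fixes g :: "'k::metric_space \<Rightarrow> 'a::real_normed_vector"
  assumes "compact K" "continuous_on K g" "k \<in> K"
  shows "norm (g k) \<le> sup_norm K g"
proof -
  have "bounded (g ` K)"
    using assms by (intro compact_imp_bounded compact_continuous_image)
  then have "bdd_above ((\<lambda>k. norm (g k)) ` K)"
    using bdd_above_norm[of "g ` K"] by (simp add: image_image)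
  then show ?thesis
    unfolding sup_norm_def by (rule cSUP_upper[OF assms(3)])
qed

lemma norm_sum_ge_functional:
  fixes z :: "'i \<Rightarrow> 'a::real_normed_vector"
  assumes "finite J" "I \<subseteq> J" "linear \<phi>" "\<And>x. \<phi> x \<le> norm x"
    and "\<And>j. j \<in> I \<Longrightarrow> e * w j \<le> \<phi> (z j)"
    and "\<And>j. j \<in> J - I \<Longrightarrow> norm (z j) \<le> d * w j"
  shows "e * (\<Sum>j\<in>I. w j) - d * (\<Sum>j\<in>J - I. w j) \<le> norm (\<Sum>j\<in>J. z j)"
proof -
  have "- (d * w j) \<le> \<phi> (z j)" if "j \<in> J - I" for j
    using assms(4)[of "- z j"] assms(6)[OF that] by (simp add: linear_neg[OF assms(3)])
  then have "e * (\<Sum>j\<in>I. w j) - d * (\<Sum>j\<in>J - I. w j)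
      \<le> (\<Sum>j\<in>I. \<phi> (z j)) + (\<Sum>j\<in>J - I. \<phi> (z j))"
    using assms(5) by (simp add: sum_distrib_left diff_conv_add_uminus flip: sum_negf)
      (intro add_mono sum_mono; simp)
  also have "\<dots> = \<phi> (\<Sum>j\<in>J. z j)"
    using assms(1,2)
    by (simp add: linear_sum[OF assms(3)] linear_add[OF assms(3)] sum.subset_diff[of I J] add.commute)
  also have "\<dots> \<le> norm (\<Sum>j\<in>J. z j)"
    by (rule assms(4))
  finally show ?thesis .
qed

lemma sum_pigeonhole_cover:
  fixes w :: "'i \<Rightarrow> real"
  assumes "finite J" "finite C" "C \<noteq> {}"
    and "\<And>j. j \<in> J \<Longrightarrow> \<exists>c\<in>C. P c j" "\<And>j. j \<in> J \<Longrightarrow> 0 \<le> w j"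
  shows "\<exists>c\<in>C. (\<Sum>j\<in>J. w j) \<le> card C * (\<Sum>j | j \<in> J \<and> P c j. w j)"
proof (rule ccontr)
  assume "\<not> ?thesis"
  then have less: "(\<Sum>j\<in>J. w j) / card C > (\<Sum>j | j \<in> J \<and> P c j. w j)" if "c \<in> C" for c
    using that assms(2,3) by (auto simp: field_simps card_gt_0_iff)
  have "(\<Sum>j\<in>J. w j) \<le> (\<Sum>j\<in>J. \<Sum>c | c \<in> C \<and> P c j. w j)"
  proof (rule sum_mono)
    fix j assume "j \<in> J"
    then obtain c where "c \<in> C" "P c j" using assms(4) by blast
    then show "w j \<le> (\<Sum>c | c \<in> C \<and> P c j. w j)"
      using assms(2,5) \<open>j \<in> J\<close> by (intro member_le_sum) auto
  qed
  also have "\<dots> = (\<Sum>c\<in>C. \<Sum>j | j \<in> J \<and> P c j. w j)"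
    using assms(1,2) by (rule sum.swap_restrict)
  also have "\<dots> < (\<Sum>c\<in>C. (\<Sum>j\<in>J. w j) / card C)"
    using assms(2,3) less by (intro sum_strict_mono) auto
  also have "\<dots> = (\<Sum>j\<in>J. w j)"
    using assms(2,3) by simp
  finally show False by simp
qed

lemma sup_norm_sum_ge_l1:
  fixes f :: "'i \<Rightarrow> 'k::metric_space \<Rightarrow> 'a::real_normed_field" and a :: "'i \<Rightarrow> 'a"
    and \<phi> :: "'c \<Rightarrow> 'a \<Rightarrow> real"
  assumes "compact K" "finite J" "finite C" "C \<noteq> {}" "card C \<le> 4"
    and "0 < \<epsilon>" "\<delta> < \<epsilon> / 34"
    and cont: "\<And>j. j \<in> J \<Longrightarrow> continuous_on K (f j)"
    and separating: "\<And>I. I \<subseteq> J \<Longrightarrow> \<exists>k\<in>K. (\<forall>j\<in>I. Q (f j k)) \<and> (\<forall>j\<in>J - I. norm (f j k) < \<delta>)"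
    and functional: "\<And>c. c \<in> C \<Longrightarrow> linear (\<phi> c)" "\<And>c x. c \<in> C \<Longrightarrow> \<phi> c x \<le> norm x"
    and cover: "\<And>x. \<exists>c\<in>C. P c x"
    and positive: "\<And>c x u. c \<in> C \<Longrightarrow> P c x \<Longrightarrow> Q u \<Longrightarrow> (\<epsilon> - \<delta>) * norm x \<le> \<phi> c (x * u)"
  shows "\<epsilon> / 16 * (\<Sum>j\<in>J. norm (a j)) \<le> sup_norm K (\<lambda>k. \<Sum>j\<in>J. a j * f j k)"
proof -
  define S where "S = (\<Sum>j\<in>J. norm (a j))"
  obtain c where "c \<in> C" and S_le: "S \<le> card C * (\<Sum>j | j \<in> J \<and> P c (a j). norm (a j))"
    using sum_pigeonhole_cover[OF assms(2-4), of "\<lambda>c j. P c (a j)" "\<lambda>j. norm (a j)"] cover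
    unfolding S_def by auto
  define I where "I = {j \<in> J. P c (a j)}"
  define s where "s = (\<Sum>j\<in>I. norm (a j))"
  have "I \<subseteq> J" by (auto simp: I_def)
  then obtain k where "k \<in> K" and Q: "\<forall>j\<in>I. Q (f j k)" and small: "\<forall>j\<in>J - I. norm (f j k) < \<delta>"
    using separating by blast
  have "(\<epsilon> - \<delta>) * s - \<delta> * (\<Sum>j\<in>J - I. norm (a j)) \<le> norm (\<Sum>j\<in>J. a j * f j k)"
    unfolding s_def
  proof (rule norm_sum_ge_functional[OF assms(2) \<open>I \<subseteq> J\<close> functional[OF \<open>c \<in> C\<close>]])
    show "(\<epsilon> - \<delta>) * norm (a j) \<le> \<phi> c (a j * f j k)" if "j \<in> I" for j
      using positive[OF \<open>c \<in> C\<close>] Q that by (auto simp: I_def)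
    show "norm (a j * f j k) \<le> \<delta> * norm (a j)" if "j \<in> J - I" for j
    proof -
      have "norm (f j k) \<le> \<delta>" using small that by (simp add: less_imp_le)
      then show ?thesis by (simp add: norm_mult mult.commute[of \<delta>] mult_left_mono)
    qed
  qed
  also have "\<dots> \<le> sup_norm K (\<lambda>k. \<Sum>j\<in>J. a j * f j k)"
    using cont by (intro norm_le_sup_norm[OF assms(1) _ \<open>k \<in> K\<close>] continuous_intros) auto
  also have "(\<Sum>j\<in>J - I. norm (a j)) = S - s"
    unfolding S_def s_def using \<open>I \<subseteq> J\<close> assms(2) by (simp add: sum_diff)
  finally have "\<epsilon> * s - \<delta> * S \<le> sup_norm K (\<lambda>k. \<Sum>j\<in>J. a j * f j k)"
    by (simp add: algebra_simps)
  moreover have "\<epsilon> * S \<le> 4 * (\<epsilon> * s)"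
  proof -
    have "0 \<le> s" unfolding s_def by (simp add: sum_nonneg)
    then have "card C * s \<le> 4 * s" using assms(5) by (intro mult_right_mono) auto
    with S_le have "S \<le> 4 * s" by (simp add: I_def s_def)
    then show ?thesis using assms(6) by (simp add: mult.left_commute)
  qed
  moreover have "\<delta> * S \<le> \<epsilon> / 34 * S" and "0 \<le> \<epsilon> * S"
  proof -
    have "0 \<le> S" unfolding S_def by (simp add: sum_nonneg)
    then show "\<delta> * S \<le> \<epsilon> / 34 * S"
      using assms(7) by (intro mult_right_mono) simp_all
    show "0 \<le> \<epsilon> * S"
      using \<open>0 \<le> S\<close> assms(6) by simp
  qed
  ultimately show ?thesis
    unfolding S_def by linarith
qed

lemma Im_mult_ge_of_quadrant:
  assumes "0 \<le> Re w" "0 \<le> Im w" "0 \<le> e" "e < Re u" "e < Im u"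
  shows "e * cmod w \<le> Im (w * u)"
proof -
  have "e * cmod w \<le> e * (Re w + Im w)"
    using cmod_le[of w] assms(1-3) by (intro mult_left_mono) auto
  also have "\<dots> \<le> Im u * Re w + Re u * Im w"
  proof -
    have "e * Re w \<le> Im u * Re w" "e * Im w \<le> Re u * Im w"
      using assms by (simp_all add: mult_right_mono less_imp_le)
    then show ?thesis by (simp add: distrib_left)
  qed
  finally show ?thesis by (simp add: mult.commute)
qed

lemma complex_quadrant_cover:
  "\<exists>c\<in>{1, \<i>, -1, -\<i>}. 0 \<le> Re (c * z) \<and> 0 \<le> Im (c * z)"
  by (cases "0 \<le> Re z"; cases "0 \<le> Im z") auto

lemma sup_norm_sum_ge_l1_real:
  fixes f :: "'i \<Rightarrow> 'k::metric_space \<Rightarrow> real" and a :: "'i \<Rightarrow> real"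
  assumes "compact K" "finite J" "0 < \<epsilon>" "\<delta> < \<epsilon> / 34"
    and "\<And>j. j \<in> J \<Longrightarrow> continuous_on K (f j)"
    and separating: "\<And>I. I \<subseteq> J \<Longrightarrow> \<exists>k\<in>K. (\<forall>j\<in>I. \<epsilon> - \<delta> < pos_part_real (f j k)) \<and>
          (\<forall>j\<in>J - I. \<bar>f j k\<bar> < \<delta>)"
  shows "\<epsilon> / 16 * (\<Sum>j\<in>J. \<bar>a j\<bar>) \<le> sup_norm K (\<lambda>k. \<Sum>j\<in>J. a j * f j k)"
proof -
  have "0 < \<epsilon> - \<delta>" using assms(3,4) by linarith
  have "\<epsilon> / 16 * (\<Sum>j\<in>J. norm (a j)) \<le> sup_norm K (\<lambda>k. \<Sum>j\<in>J. a j * f j k)"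
  proof (rule sup_norm_sum_ge_l1[where C = "{1, -1}" and \<phi> = "\<lambda>c x. c * x"
        and P = "\<lambda>c x. 0 \<le> c * x" and Q = "\<lambda>u. \<epsilon> - \<delta> < u"])
    show "\<exists>k\<in>K. (\<forall>j\<in>I. \<epsilon> - \<delta> < f j k) \<and> (\<forall>j\<in>J - I. norm (f j k) < \<delta>)" if "I \<subseteq> J" for I
      using separating[OF that] \<open>0 < \<epsilon> - \<delta>\<close> by (auto simp: pos_part_real_def less_max_iff_disj)
    show "(\<epsilon> - \<delta>) * norm x \<le> c * (x * u)"
      if "c \<in> {1, -1}" "0 \<le> c * x" "\<epsilon> - \<delta> < u" for c x u
    proof -
      have "norm x = c * x" using that(1,2) by auto
      then show ?thesis
        using mult_right_mono[of "\<epsilon> - \<delta>" u "c * x"] that(2,3) by (simp add: ac_simps)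
    qed
  qed (use assms in \<open>auto simp: linear_iff\<close>)
  then show ?thesis by simp
qed

lemma sup_norm_sum_ge_l1_complex:
  fixes f :: "'i \<Rightarrow> 'k::metric_space \<Rightarrow> complex" and a :: "'i \<Rightarrow> complex"
  assumes "compact K" "finite J" "0 < \<epsilon>" "\<delta> < \<epsilon> / 34"
    and "\<And>j. j \<in> J \<Longrightarrow> continuous_on K (f j)"
    and separating: "\<And>I. I \<subseteq> J \<Longrightarrow> \<exists>k\<in>K. (\<forall>j\<in>I. \<epsilon> - \<delta> < pos_part_complex (f j k)) \<and>
          (\<forall>j\<in>J - I. cmod (f j k) < \<delta>)"
  shows "\<epsilon> / 16 * (\<Sum>j\<in>J. cmod (a j)) \<le> sup_norm K (\<lambda>k. \<Sum>j\<in>J. a j * f j k)"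
proof (rule sup_norm_sum_ge_l1[where C = "{1, \<i>, -1, -\<i>}" and \<phi> = "\<lambda>c z. Im (c * z)"
      and P = "\<lambda>c z. 0 \<le> Re (c * z) \<and> 0 \<le> Im (c * z)"
      and Q = "\<lambda>u. \<epsilon> - \<delta> < Re u \<and> \<epsilon> - \<delta> < Im u"])
  have "0 < \<epsilon> - \<delta>" using assms(3,4) by linarith
  then show "\<exists>k\<in>K. (\<forall>j\<in>I. \<epsilon> - \<delta> < Re (f j k) \<and> \<epsilon> - \<delta> < Im (f j k)) \<and>
      (\<forall>j\<in>J - I. norm (f j k) < \<delta>)"
    if "I \<subseteq> J" for I
    using separating[OF that] by (auto simp: pos_part_complex_def less_max_iff_disj)
  show "(\<epsilon> - \<delta>) * norm z \<le> Im (c * (z * u))"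
    if "c \<in> {1, \<i>, -1, -\<i>}" "0 \<le> Re (c * z) \<and> 0 \<le> Im (c * z)"
      and "\<epsilon> - \<delta> < Re u \<and> \<epsilon> - \<delta> < Im u"
    for c z u
  proof -
    have "cmod z = cmod (c * z)" using that(1) by (auto simp: norm_mult)
    with that(2,3) \<open>0 < \<epsilon> - \<delta>\<close> show ?thesis
      using Im_mult_ge_of_quadrant[of "c * z" "\<epsilon> - \<delta>" u] by (simp add: mult.assoc)
  qed
  show "Im (c * z) \<le> norm z" if "c \<in> {1, \<i>, -1, -\<i>}" for c z
    using abs_Im_le_cmod[of "c * z"] that by (auto simp: norm_mult)
  show "linear (\<lambda>z. Im (c * z))" for c
    by (intro bounded_linear.linear bounded_linear_compose[OF bounded_linear_Im] bounded_linear_mult_right)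
  show "card {1, \<i>, -1, -\<i> :: complex} \<le> 4"
    using card_length[of "[1, \<i>, -1, -\<i> :: complex]"] by simp
qed (use assms complex_quadrant_cover in auto)

theorem mainTheorem12:
  fixes K :: "'k::metric_space set" and eps1 delta :: real
  assumes "compact K" and "0 < eps1" and "0 < delta" and "delta < eps1 / 34"
  shows
   "(\<forall>f :: nat \<Rightarrow> 'k \<Rightarrow> real.
       (\<forall>n\<ge>1. continuous_on K (f n) \<and> sup_norm K (f n) = 1) \<and>
       (\<forall>N I. I \<subseteq> {1..N} \<longrightarrow>
          (\<exists>k\<in>K. (\<forall>n\<in>I. pos_part_real (f n k) > eps1 - delta) \<and>
                 (\<forall>n\<in>{1..N} - I. \<bar>f n k\<bar> < delta)))
       \<longrightarrow> (\<forall>N (a :: nat \<Rightarrow> real).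
              sup_norm K (\<lambda>k. \<Sum>j=1..N. a j * f j k) \<ge> eps1 / 16 * (\<Sum>j=1..N. \<bar>a j\<bar>)))
    \<and>
    (\<forall>f :: nat \<Rightarrow> 'k \<Rightarrow> complex.
       (\<forall>n\<ge>1. continuous_on K (f n) \<and> sup_norm K (f n) = 1) \<and>
       (\<forall>N I. I \<subseteq> {1..N} \<longrightarrow>
          (\<exists>k\<in>K. (\<forall>n\<in>I. pos_part_complex (f n k) > eps1 - delta) \<and>
                 (\<forall>n\<in>{1..N} - I. cmod (f n k) < delta)))
       \<longrightarrow> (\<forall>N (a :: nat \<Rightarrow> complex).
              sup_norm K (\<lambda>k. \<Sum>j=1..N. a j * f j k) \<ge> eps1 / 16 * (\<Sum>j=1..N. cmod (a j))))"
proof (intro conjI allI impI, goal_cases real complex)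
  case (real f N a)
  then show ?case
    by (intro sup_norm_sum_ge_l1_real[OF assms(1) _ assms(2,4)]) auto
next
  case (complex f N a)
  then show ?case
    by (intro sup_norm_sum_ge_l1_complex[OF assms(1) _ assms(2,4)]) auto
qed

end
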